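(* Let $\mathbf A$ be a pseudo-Kleene lattice. Then $\mathbf A$ satisfies (SP2) if and only if, for all $x,y\in A$ with $x\leq y$: (1) $\pi_{0_{x,y}}(x)$ and $\pi_{0_{x,y}}(y)$ are sharp elements of $\mathbf{Local}(x,y)$; and (2) $(\mathrm{Sh}(\mathbf{Local}(x,y)),\leq,{}',0_{x,y},1_{x,y})$ is an orthogonal poset.
   Context: A pseudo-Kleene lattice is an algebra $(A,\land,\lor,{}',0,1)$ that is a bounded lattice with an antitone involution ${}'$ ($x\leq y\Rightarrow y'\leq x'$, $x''=x$) satisfying $x\land x'\leq y\lor y'$. (SP2): for all $x,y$, $x\leq y$ implies $(x\land x')\lor(y\land y')=(x'\land y)\land(x'\land y)'$. For $x,y\in A$ put $0_{x,y}=(x\land x')\lor(y\land y')$, $1_{x,y}=(x\lor x')\land(y\lor y')$, and for $z,w\in A$, $\pi_z(w)=(w\land(z\lor z'))\lor(z\land z')$. The localizer $\mathbf{Local}(x,y)$ is the pseudo-Kleene lattice on the interval $[0_{x,y},1_{x,y}]$ with $\land,\lor,{}'$ inherited from $\mathbf A$ and bounds $0_{x,y},1_{x,y}$. An element $u$ of a pseudo-Kleene lattice with bottom $b$ is sharp if $u\land u'=b$; $\mathrm{Sh}(\cdot)$ is the set of sharp elements. An orthogonal poset is a bounded poset with antitone involution ${}'$ in which $u\land u'$ is the bottom for every $u$ (meet existing) and, whenever $u\leq v'$, the join $u\lor v$ exists; here order and joins in $\mathrm{Sh}(\mathbf{Local}(x,y))$ are understood as those inherited from $\mathbf{Local}(x,y)$,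 i.e. for sharp $u\leq v'$ the element $u\lor v$ is sharp. *)

theory Defs
  imports Main
begin

definition pseudo_kleene :: "('a::bounded_lattice \<Rightarrow> 'a) \<Rightarrow> bool" where
  "pseudo_kleene c \<longleftrightarrow>
     (\<forall>x y. x \<le> y \<longrightarrow> c y \<le> c x) \<and> (\<forall>x. c (c x) = x) \<and>
     (\<forall>x y. inf x (c x) \<le> sup y (c y))"

definition SP2 :: "('a::bounded_lattice \<Rightarrow> 'a) \<Rightarrow> bool" where
  "SP2 c \<longleftrightarrow> (\<forall>x y. x \<le> y \<longrightarrow>
      sup (inf x (c x)) (inf y (c y)) = inf (inf (c x) y) (c (inf (c x) y)))"

definition zero_xy :: "('a::bounded_lattice \<Rightarrow> 'a) \<Rightarrow> 'a \<Rightarrow> 'a \<Rightarrow> 'a" where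
  "zero_xy c x y = sup (inf x (c x)) (inf y (c y))"

definition one_xy :: "('a::bounded_lattice \<Rightarrow> 'a) \<Rightarrow> 'a \<Rightarrow> 'a \<Rightarrow> 'a" where
  "one_xy c x y = inf (sup x (c x)) (sup y (c y))"

definition proj :: "('a::bounded_lattice \<Rightarrow> 'a) \<Rightarrow> 'a \<Rightarrow> 'a \<Rightarrow> 'a" where
  "proj c z w = sup (inf w (sup z (c z))) (inf z (c z))"

text \<open>Carrier of Local(x,y): the interval [0_{x,y}, 1_{x,y}] (operations inherited).\<close>
definition local_carrier :: "('a::bounded_lattice \<Rightarrow> 'a) \<Rightarrow> 'a \<Rightarrow> 'a \<Rightarrow> 'a set" where
  "local_carrier c x y = {u. zero_xy c x y \<le> u \<and> u \<le> one_xy c x y}"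

definition Sh_local :: "('a::bounded_lattice \<Rightarrow> 'a) \<Rightarrow> 'a \<Rightarrow> 'a \<Rightarrow> 'a set" where
  "Sh_local c x y = {u \<in> local_carrier c x y. inf u (c u) = zero_xy c x y}"

text \<open>Orthogonal poset (S, \<le>, c, b, t) with order, meets and joins inherited from the ambient lattice.\<close>
definition orthogonal_poset :: "'a::lattice set \<Rightarrow> ('a \<Rightarrow> 'a) \<Rightarrow> 'a \<Rightarrow> 'a \<Rightarrow> bool" where
  "orthogonal_poset S c b t \<longleftrightarrow>
     b \<in> S \<and> t \<in> S \<and> (\<forall>u\<in>S. b \<le> u \<and> u \<le> t) \<and>
     (\<forall>u\<in>S. c u \<in> S) \<and>
     (\<forall>u\<in>S. \<forall>v\<in>S. u \<le> v \<longrightarrow> c v \<le> c u) \<and> (\<forall>u\<in>S. c (c u) = u) \<and>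
     (\<forall>u\<in>S. inf u (c u) = b) \<and>
     (\<forall>u\<in>S. \<forall>v\<in>S. u \<le> c v \<longrightarrow> sup u v \<in> S)"

end

theory Submission
  imports Defs
begin

(* Write u' for c u. For orthogonal u \<le> v', SP2 applied to u \<le> v' reads
   (u \<squnion> v) \<sqinter> (u \<squnion> v)' = (u \<sqinter> u') \<squnion> (v \<sqinter> v'), so in Local(x,y), where sharpness of u
   just means u \<sqinter> u' = 0_{x,y}, joins of orthogonal sharp elements are sharp. For x \<le> y the two
   projections are the orthogonal join x \<squnion> (y \<sqinter> y') and the complement of the orthogonal join
   y' \<squnion> (x \<sqinter> x'); hence SP2 gives (1) and (2). Conversely, the join of the first projection
   with the complement of the second is x \<squnion> y', and SP2 for x \<le> y says precisely that x \<squnion> y'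
   is sharp in Local(x,y). *)

context
  fixes c :: "'a::bounded_lattice \<Rightarrow> 'a"
  assumes pseudo_kleene: "pseudo_kleene c"
begin

lemma compl_antitone: "x \<le> y \<Longrightarrow> c y \<le> c x"
  using pseudo_kleene unfolding pseudo_kleene_def by blast

lemma compl_compl [simp]: "c (c x) = x"
  using pseudo_kleene unfolding pseudo_kleene_def by blast

lemma inf_compl_le_sup_compl: "inf x (c x) \<le> sup y (c y)"
  using pseudo_kleene unfolding pseudo_kleene_def by blast

lemma compl_le_compl_iff [simp]: "c x \<le> c y \<longleftrightarrow> y \<le> x"
  by (metis compl_antitone compl_compl)

lemma compl_sup [simp]: "c (sup x y) = inf (c x) (c y)"
proof (rule antisym)
  show "c (sup x y) \<le> inf (c x) (c y)"
    by (simp add: compl_antitone)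
  have "sup x y \<le> c (inf (c x) (c y))"
    by (metis compl_antitone compl_compl inf_le1 inf_le2 sup_least)
  then show "inf (c x) (c y) \<le> c (sup x y)"
    by (metis compl_le_compl_iff compl_compl)
qed

lemma compl_inf [simp]: "c (inf x y) = sup (c x) (c y)"
  by (metis compl_sup compl_compl)

lemma zero_xy_le_one_xy: "zero_xy c x y \<le> one_xy c x y"
  unfolding zero_xy_def one_xy_def by (intro le_infI le_supI inf_compl_le_sup_compl)

lemma compl_zero_xy [simp]: "c (zero_xy c x y) = one_xy c x y"
  unfolding zero_xy_def one_xy_def by (simp add: sup_commute)

lemma compl_one_xy [simp]: "c (one_xy c x y) = zero_xy c x y"
  by (metis compl_zero_xy compl_compl)

lemma inf_compl_of_inf_compl: "inf (inf x (c x)) (c (inf x (c x))) = inf x (c x)"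
  by (rule inf_absorb1) (simp add: le_supI2)

lemma Sh_local_iff: "u \<in> Sh_local c x y \<longleftrightarrow> inf u (c u) = zero_xy c x y"
proof
  assume sharp: "inf u (c u) = zero_xy c x y"
  have lower: "zero_xy c x y \<le> u"
    using inf_le1[of u "c u"] unfolding sharp .
  have "zero_xy c x y \<le> c u"
    using inf_le2[of u "c u"] unfolding sharp .
  then have upper: "u \<le> one_xy c x y"
    using compl_antitone by fastforce
  show "u \<in> Sh_local c x y"
    using sharp lower upper unfolding Sh_local_def local_carrier_def by blast
qed (simp add: Sh_local_def)

lemma compl_in_Sh_local: "u \<in> Sh_local c x y \<Longrightarrow> c u \<in> Sh_local c x y"
  unfolding Sh_local_iff compl_compl by (simp only: inf_commute)

lemma proj_zero_xy: "proj c (zero_xy c x y) w = sup (inf w (one_xy c x y)) (zero_xy c x y)"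
  unfolding proj_def using zero_xy_le_one_xy[of x y]
  by (simp add: sup_absorb2 inf_absorb1)

lemma proj_zero_xy_lower:
  assumes "x \<le> y"
  shows "proj c (zero_xy c x y) x = sup x (inf y (c y))"
proof -
  have "x \<le> one_xy c x y"
    unfolding one_xy_def using assms by (meson le_infI le_supI1 order_trans sup_ge1)
  then have "inf x (one_xy c x y) = x"
    by (rule inf_absorb1)
  then show ?thesis
    unfolding proj_zero_xy by (simp add: zero_xy_def sup_absorb1 sup_assoc[symmetric])
qed

lemma proj_zero_xy_upper:
  assumes "x \<le> y"
  shows "proj c (zero_xy c x y) y = inf y (sup x (c x))"
proof -
  have "inf y (one_xy c x y) = inf y (sup x (c x))"
    unfolding one_xy_def by (rule antisym) (auto intro: le_infI1 le_infI2)
  moreover have "inf x (c x) \<le> inf y (sup x (c x))"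
    using assms by (meson inf_le1 le_infI le_supI1 order_trans)
  moreover have "inf y (c y) \<le> inf y (sup x (c x))"
    using compl_antitone[OF assms] by (meson inf_le1 inf_le2 le_infI le_supI2 order_trans)
  ultimately show ?thesis
    unfolding proj_zero_xy unfolding zero_xy_def by (simp add: sup_absorb1)
qed

lemma SP2_iff_sharp_sup_compl:
  "SP2 c \<longleftrightarrow> (\<forall>x y. x \<le> y \<longrightarrow> inf (sup x (c y)) (c (sup x (c y))) = zero_xy c x y)"
proof -
  have "inf (sup x (c y)) (c (sup x (c y))) = inf (inf (c x) y) (c (inf (c x) y))" for x y
    by (simp add: inf_commute sup_commute)
  then show ?thesis
    unfolding SP2_def zero_xy_def by metis
qed

lemma SP2_inf_compl_sup:
  assumes "SP2 c" and "u \<le> c v"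
  shows "inf (sup u v) (c (sup u v)) = sup (inf u (c u)) (inf v (c v))"
proof -
  have "inf (sup u (c (c v))) (c (sup u (c (c v)))) = zero_xy c u (c v)"
    using assms unfolding SP2_iff_sharp_sup_compl by blast
  then show ?thesis
    by (simp add: zero_xy_def inf_commute)
qed

lemma sup_in_Sh_local:
  assumes "SP2 c" and "u \<in> Sh_local c x y" and "v \<in> Sh_local c x y" and "u \<le> c v"
  shows "sup u v \<in> Sh_local c x y"
proof -
  have "inf (sup u v) (c (sup u v)) = sup (inf u (c u)) (inf v (c v))"
    using assms(1,4) by (rule SP2_inf_compl_sup)
  also have "\<dots> = zero_xy c x y"
    using assms(2,3) unfolding Sh_local_iff by simp
  finally show ?thesis
    unfolding Sh_local_iff .
qed

lemma orthogonal_poset_Sh_local: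
  assumes "SP2 c"
  shows "orthogonal_poset (Sh_local c x y) c (zero_xy c x y) (one_xy c x y)"
  unfolding orthogonal_poset_def
proof (intro conjI ballI impI)
  show "zero_xy c x y \<in> Sh_local c x y"
    unfolding Sh_local_iff compl_zero_xy using zero_xy_le_one_xy by (rule inf_absorb1)
  show "one_xy c x y \<in> Sh_local c x y"
    unfolding Sh_local_iff compl_one_xy using zero_xy_le_one_xy by (rule inf_absorb2)
next
  fix u assume u: "u \<in> Sh_local c x y"
  then show "zero_xy c x y \<le> u" "u \<le> one_xy c x y" "inf u (c u) = zero_xy c x y"
    unfolding Sh_local_def local_carrier_def by auto
  show "c u \<in> Sh_local c x y"
    using u by (rule compl_in_Sh_local)
  show "c (c u) = u"
    by (rule compl_compl)
next
  fix u v
  show "u \<le> v \<Longrightarrow> c v \<le> c u"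
    by (rule compl_antitone)
  show "u \<in> Sh_local c x y \<Longrightarrow> v \<in> Sh_local c x y \<Longrightarrow> u \<le> c v \<Longrightarrow> sup u v \<in> Sh_local c x y"
    using assms by (rule sup_in_Sh_local)
qed

lemma proj_zero_xy_lower_in_Sh_local:
  assumes "SP2 c" and "x \<le> y"
  shows "proj c (zero_xy c x y) x \<in> Sh_local c x y"
proof -
  let ?b = "inf y (c y)"
  have "x \<le> c ?b"
    by (simp add: le_supI2[OF assms(2)])
  then have "inf (sup x ?b) (c (sup x ?b)) = sup (inf x (c x)) (inf ?b (c ?b))"
    using assms(1) by (intro SP2_inf_compl_sup)
  also have "\<dots> = zero_xy c x y"
    unfolding inf_compl_of_inf_compl zero_xy_def ..
  finally show ?thesis
    unfolding proj_zero_xy_lower[OF assms(2)] Sh_local_iff .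
qed

lemma proj_zero_xy_upper_in_Sh_local:
  assumes "SP2 c" and "x \<le> y"
  shows "proj c (zero_xy c x y) y \<in> Sh_local c x y"
proof -
  let ?a = "inf x (c x)"
  have "c y \<le> c ?a"
    by (simp add: le_supI1[OF compl_antitone[OF assms(2)]])
  then have "inf (sup (c y) ?a) (c (sup (c y) ?a)) = sup (inf (c y) (c (c y))) (inf ?a (c ?a))"
    using assms(1) by (intro SP2_inf_compl_sup)
  also have "\<dots> = zero_xy c x y"
    unfolding inf_compl_of_inf_compl compl_compl zero_xy_def by (simp only: inf_commute sup_commute)
  finally have "sup (c y) ?a \<in> Sh_local c x y"
    unfolding Sh_local_iff .
  then have "c (sup (c y) ?a) \<in> Sh_local c x y"
    by (rule compl_in_Sh_local)
  moreover have "c (sup (c y) ?a) = inf y (sup x (c x))"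
    by (simp add: sup_commute)
  ultimately show ?thesis
    unfolding proj_zero_xy_upper[OF assms(2)] by simp
qed

lemma sup_compl_in_Sh_local:
  assumes "x \<le> y"
    and lower: "proj c (zero_xy c x y) x \<in> Sh_local c x y"
    and upper: "proj c (zero_xy c x y) y \<in> Sh_local c x y"
    and orthogonal: "orthogonal_poset (Sh_local c x y) c (zero_xy c x y) (one_xy c x y)"
  shows "sup x (c y) \<in> Sh_local c x y"
proof -
  let ?p = "sup x (inf y (c y))" and ?q = "inf y (sup x (c x))"
  have "?p \<in> Sh_local c x y"
    using lower unfolding proj_zero_xy_lower[OF assms(1)] .
  moreover have "c ?q \<in> Sh_local c x y"
    using upper unfolding proj_zero_xy_upper[OF assms(1)] by (rule compl_in_Sh_local)
  moreover have "?p \<le> c (c ?q)"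
    using assms(1) compl_antitone[OF assms(1)]
    by (simp add: le_infI2 le_supI1 le_supI2)
  ultimately have "sup ?p (c ?q) \<in> Sh_local c x y"
    using orthogonal unfolding orthogonal_poset_def by blast
  moreover have "sup ?p (c ?q) = sup x (c y)"
    by (rule antisym) (auto intro: le_supI1 le_supI2 le_infI1 le_infI2)
  ultimately show ?thesis
    by simp
qed

end

theorem lemma3p20:
  fixes c :: "'a::bounded_lattice \<Rightarrow> 'a"
  assumes "pseudo_kleene c"
  shows "SP2 c \<longleftrightarrow>
    (\<forall>x y. x \<le> y \<longrightarrow>
       proj c (zero_xy c x y) x \<in> Sh_local c x y \<and>
       proj c (zero_xy c x y) y \<in> Sh_local c x y \<and>
       orthogonal_poset (Sh_local c x y) c (zero_xy c x y) (one_xy c x y))"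
proof (intro iffI allI impI conjI)
  fix x y :: 'a
  assume "SP2 c" and "x \<le> y"
  then show "proj c (zero_xy c x y) x \<in> Sh_local c x y"
    and "proj c (zero_xy c x y) y \<in> Sh_local c x y"
    and "orthogonal_poset (Sh_local c x y) c (zero_xy c x y) (one_xy c x y)"
    using assms proj_zero_xy_lower_in_Sh_local proj_zero_xy_upper_in_Sh_local
      orthogonal_poset_Sh_local by blast+
next
  assume "\<forall>x y. x \<le> y \<longrightarrow>
       proj c (zero_xy c x y) x \<in> Sh_local c x y \<and>
       proj c (zero_xy c x y) y \<in> Sh_local c x y \<and>
       orthogonal_poset (Sh_local c x y) c (zero_xy c x y) (one_xy c x y)"
  then have "x \<le> y \<Longrightarrow> sup x (c y) \<in> Sh_local c x y" for x y
    using sup_compl_in_Sh_local[OF assms] by blast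
  then show "SP2 c"
    by (simp add: SP2_iff_sharp_sup_compl[OF assms] Sh_local_iff[OF assms])
qed

end
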